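(* Let $W_\Gamma$ be a graph product on a finite graph $\Gamma=(V,E)$ with every vertex group primary or infinite cyclic. Then for every $\sim_\tau$-equivalence class $M\subset V$ that is minimal with respect to $\le_\tau$, the set $M\cup L_M$ is a lower cone with respect to $\le_\tau$. Moreover, if every $G_v$ is finite, then $L_M$ is a lower cone with respect to $\le_\tau$ for every subset $M\subset V$.
   Context: Graph: $\Gamma=(V,E)$, $V$ non-empty finite, $E$ a set of 2-element subsets; $lk(v)=\{x:\{v,x\}\in E\}$, $st(v)=lk(v)\cup\{v\}$. A group is primary if cyclic of order $p^k$, $p$ prime, $k\ge1$. Relation $\le_\tau$ on $V$: $v\le_\tau v$; for $v\neq w$, $v\le_\tau w$ iff either (a) $|G_v|=\infty$ and $lk(v)\subset st(w)$, or (b) $|G_v|=p^k$, $|G_w|=p^\ell$ for the same prime $p$ and $st(v)\subset st(w)$. This is a preorder; $v\sim_\tau w$ iff $v\le_\tau w$ and $w\le_\tau v$; minimality of classes refers to the induced partial order on classes. $X\subset V$ is a lower cone if $t\in X$, $s\in V$, $s\le_\tau t$ imply $s\in X$. For $M\subset V$, $L_M=V\setminus\bigcup_{w\in M}st(w)$ (the vertices adjacent to no vertex of $M$ and not in $M$). *)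

theory Defs
  imports "HOL-Algebra.Generated_Groups" "HOL-Computational_Algebra.Primes"
begin

definition fin_graph :: "'a set \<Rightarrow> 'a set set \<Rightarrow> bool" where
  "fin_graph V E \<longleftrightarrow> finite V \<and> V \<noteq> {} \<and>
     (\<forall>e\<in>E. \<exists>x y. x \<noteq> y \<and> x \<in> V \<and> y \<in> V \<and> e = {x, y})"

definition lk :: "'a set \<Rightarrow> 'a set set \<Rightarrow> 'a \<Rightarrow> 'a set" where
  "lk V E v = {x \<in> V. {v, x} \<in> E}"

definition st :: "'a set \<Rightarrow> 'a set set \<Rightarrow> 'a \<Rightarrow> 'a set" where
  "st V E v = lk V E v \<union> {v}"

definition cyclic_group :: "('g, 'b) monoid_scheme \<Rightarrow> bool" where
  "cyclic_group G \<longleftrightarrow> group G \<and> (\<exists>g\<in>carrier G. carrier G = generate G {g})"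

definition primary_group :: "('g, 'b) monoid_scheme \<Rightarrow> bool" where
  "primary_group G \<longleftrightarrow> cyclic_group G \<and> finite (carrier G) \<and>
     (\<exists>(p::nat) k. prime p \<and> k \<ge> 1 \<and> card (carrier G) = p ^ k)"

definition inf_cyclic_group :: "('g, 'b) monoid_scheme \<Rightarrow> bool" where
  "inf_cyclic_group G \<longleftrightarrow> cyclic_group G \<and> infinite (carrier G)"

definition le_tau :: "'a set \<Rightarrow> 'a set set \<Rightarrow> ('a \<Rightarrow> ('g, 'b) monoid_scheme) \<Rightarrow> 'a \<Rightarrow> 'a \<Rightarrow> bool" where
  "le_tau V E G v w \<longleftrightarrow> v = w \<or>
     (v \<noteq> w \<and>
       ((infinite (carrier (G v)) \<and> lk V E v \<subseteq> st V E w) \<or>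
        ((\<exists>(p::nat) k l. prime p \<and> k \<ge> 1 \<and> l \<ge> 1 \<and>
            finite (carrier (G v)) \<and> finite (carrier (G w)) \<and>
            card (carrier (G v)) = p ^ k \<and> card (carrier (G w)) = p ^ l)
         \<and> st V E v \<subseteq> st V E w)))"

definition sim_tau :: "'a set \<Rightarrow> 'a set set \<Rightarrow> ('a \<Rightarrow> ('g, 'b) monoid_scheme) \<Rightarrow> 'a \<Rightarrow> 'a \<Rightarrow> bool" where
  "sim_tau V E G v w \<longleftrightarrow> le_tau V E G v w \<and> le_tau V E G w v"

definition tau_class :: "'a set \<Rightarrow> 'a set set \<Rightarrow> ('a \<Rightarrow> ('g, 'b) monoid_scheme) \<Rightarrow> 'a set \<Rightarrow> bool" where
  "tau_class V E G M \<longleftrightarrow> (\<exists>v\<in>V. M = {w \<in> V. sim_tau V E G v w})"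

definition class_le :: "'a set \<Rightarrow> 'a set set \<Rightarrow> ('a \<Rightarrow> ('g, 'b) monoid_scheme) \<Rightarrow> 'a set \<Rightarrow> 'a set \<Rightarrow> bool" where
  "class_le V E G M1 M2 \<longleftrightarrow> (\<exists>x\<in>M1. \<exists>y\<in>M2. le_tau V E G x y)"

definition minimal_tau_class :: "'a set \<Rightarrow> 'a set set \<Rightarrow> ('a \<Rightarrow> ('g, 'b) monoid_scheme) \<Rightarrow> 'a set \<Rightarrow> bool" where
  "minimal_tau_class V E G M \<longleftrightarrow> tau_class V E G M \<and>
     (\<forall>M'. tau_class V E G M' \<and> class_le V E G M' M \<longrightarrow> M' = M)"

definition lower_cone :: "'a set \<Rightarrow> 'a set set \<Rightarrow> ('a \<Rightarrow> ('g, 'b) monoid_scheme) \<Rightarrow> 'a set \<Rightarrow> bool" where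
  "lower_cone V E G X \<longleftrightarrow> X \<subseteq> V \<and>
     (\<forall>t\<in>X. \<forall>s\<in>V. le_tau V E G s t \<longrightarrow> s \<in> X)"

definition L_set :: "'a set \<Rightarrow> 'a set set \<Rightarrow> 'a set \<Rightarrow> 'a set" where
  "L_set V E M = V - (\<Union>w\<in>M. st V E w)"

end

theory Submission
  imports Defs
begin

text \<open>A minimal class is itself a lower cone. Whichever clause of the definition gives \<open>s \<le>\<^sub>\<tau> t\<close> with \<open>s \<noteq> t\<close>, we get
  \<open>lk(s) \<subseteq> st(t)\<close>. So a vertex \<open>w\<close> adjacent to \<open>s\<close> lies in \<open>st(t)\<close>, i.e. \<open>t \<in> st(w)\<close>;
  hence \<open>s \<notin> L\<^sub>M\<close> forces \<open>t \<notin> L\<^sub>M\<close> unless \<open>s \<in> M\<close>. For finite \<open>G\<^sub>s\<close> even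
  \<open>st(s) \<subseteq> st(t)\<close>, which excludes \<open>s \<in> M\<close> as well.\<close>

lemma mem_st_sym:
  assumes "x \<in> st V E w" "x \<in> V" "w \<in> V"
  shows "w \<in> st V E x"
  using assms unfolding st_def lk_def by (auto simp: insert_commute)

lemma le_tau_lk_subset_st:
  assumes "le_tau V E G s t" "s \<noteq> t"
  shows "lk V E s \<subseteq> st V E t"
  using assms unfolding le_tau_def st_def by auto

lemma le_tau_finite_st_subset:
  assumes "le_tau V E G s t" "s \<noteq> t" "finite (carrier (G s))"
  shows "st V E s \<subseteq> st V E t"
  using assms unfolding le_tau_def by auto

lemma le_tau_mem_L_set:
  assumes "M \<subseteq> V" "t \<in> L_set V E M" "s \<in> V" "le_tau V E G s t" "s \<notin> M"
  shows "s \<in> L_set V E M"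
proof (rule ccontr)
  assume "s \<notin> L_set V E M"
  then obtain w where w: "w \<in> M" "s \<in> st V E w"
    using \<open>s \<in> V\<close> unfolding L_set_def by auto
  have "t \<in> V" using \<open>t \<in> L_set V E M\<close> unfolding L_set_def by blast
  have "s \<noteq> t" using assms(2,5) \<open>s \<notin> L_set V E M\<close> by auto
  have "w \<in> V" using w(1) \<open>M \<subseteq> V\<close> by blast
  have "s \<noteq> w" using w(1) \<open>s \<notin> M\<close> by blast
  then have "w \<in> lk V E s"
    using w(2) \<open>w \<in> V\<close> unfolding st_def lk_def by (auto simp: insert_commute)
  then have "w \<in> st V E t"
    using le_tau_lk_subset_st[OF \<open>le_tau V E G s t\<close> \<open>s \<noteq> t\<close>] by blast
  then have "t \<in> st V E w"
    using \<open>w \<in> V\<close> \<open>t \<in> V\<close> by (rule mem_st_sym)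
  then show False
    using \<open>t \<in> L_set V E M\<close> w(1) unfolding L_set_def by auto
qed

lemma minimal_tau_class_lower_cone:
  assumes "minimal_tau_class V E G M"
  shows "lower_cone V E G M"
  unfolding lower_cone_def
proof (intro conjI ballI impI)
  show "M \<subseteq> V"
    using assms unfolding minimal_tau_class_def tau_class_def by auto
next
  fix t s assume "t \<in> M" "s \<in> V" "le_tau V E G s t"
  define Ms where "Ms = {w \<in> V. sim_tau V E G s w}"
  have "s \<in> Ms"
    unfolding Ms_def sim_tau_def le_tau_def using \<open>s \<in> V\<close> by auto
  have "tau_class V E G Ms"
    unfolding tau_class_def Ms_def using \<open>s \<in> V\<close> by auto
  moreover have "class_le V E G Ms M"
    unfolding class_le_def using \<open>s \<in> Ms\<close> \<open>t \<in> M\<close> \<open>le_tau V E G s t\<close> by auto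
  ultimately have "Ms = M"
    using assms unfolding minimal_tau_class_def by blast
  then show "s \<in> M" using \<open>s \<in> Ms\<close> by simp
qed

lemma lower_cone_Un_L_set:
  assumes "lower_cone V E G M"
  shows "lower_cone V E G (M \<union> L_set V E M)"
  unfolding lower_cone_def
proof (intro conjI ballI impI)
  have "M \<subseteq> V" using assms unfolding lower_cone_def by simp
  then show "M \<union> L_set V E M \<subseteq> V" unfolding L_set_def by blast
  fix t s assume t: "t \<in> M \<union> L_set V E M" and "s \<in> V" and le: "le_tau V E G s t"
  show "s \<in> M \<union> L_set V E M"
  proof (cases "t \<in> M")
    case True
    then show ?thesis using assms \<open>s \<in> V\<close> le unfolding lower_cone_def by blast
  next
    case False
    then have "t \<in> L_set V E M" using t by simp
    then show ?thesis using le_tau_mem_L_set[OF \<open>M \<subseteq> V\<close> _ \<open>s \<in> V\<close> le] by blast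
  qed
qed

lemma lower_cone_L_set_finite:
  assumes fin: "\<forall>v\<in>V. finite (carrier (G v))" and "M \<subseteq> V"
  shows "lower_cone V E G (L_set V E M)"
  unfolding lower_cone_def
proof (intro conjI ballI impI)
  show "L_set V E M \<subseteq> V" unfolding L_set_def by blast
next
  fix t s assume t: "t \<in> L_set V E M" and "s \<in> V" and le: "le_tau V E G s t"
  have "s \<notin> M"
  proof
    assume "s \<in> M"
    then have "s \<noteq> t" using t unfolding L_set_def st_def by auto
    then have "s \<in> st V E t"
      using le_tau_finite_st_subset[OF le _ fin[rule_format, OF \<open>s \<in> V\<close>]]
      unfolding st_def by blast
    moreover have "t \<in> V" using t unfolding L_set_def by blast
    ultimately have "t \<in> st V E s"
      using mem_st_sym \<open>s \<in> V\<close> by metis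
    then show False using t \<open>s \<in> M\<close> unfolding L_set_def by auto
  qed
  then show "s \<in> L_set V E M"
    using le_tau_mem_L_set[OF \<open>M \<subseteq> V\<close> t \<open>s \<in> V\<close> le] by blast
qed

theorem lemma6p8:
  fixes V :: "'a set" and E :: "'a set set" and G :: "'a \<Rightarrow> ('g, 'b) monoid_scheme"
  assumes "fin_graph V E"
    and "\<forall>v\<in>V. primary_group (G v) \<or> inf_cyclic_group (G v)"
  shows "(\<forall>M. minimal_tau_class V E G M \<longrightarrow> lower_cone V E G (M \<union> L_set V E M))
       \<and> ((\<forall>v\<in>V. finite (carrier (G v))) \<longrightarrow>
            (\<forall>M. M \<subseteq> V \<longrightarrow> lower_cone V E G (L_set V E M)))"
  using minimal_tau_class_lower_cone lower_cone_Un_L_set lower_cone_L_set_finite by blast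

end
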